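(* Fix $q\ge2$ and $z\in\mathbb Z$, and set $k=\lceil\log_q n\rceil+z$ and $\Delta_n=\log_q n-\lceil\log_q n\rceil$. Then $$\lim_{n\to\infty}\frac{a_q(n,k)}{q^n\,e^{-(q-1)q^{\Delta_n-z-1}}}=1.$$
   Context: $\Sigma_q=\{0,\dots,q-1\}$. A vector in $\Sigma_q^n$ is a $k$-RLL vector if $n<k$ or it contains no run of $k$ consecutive zeros; $a_q(n,k)$ is the number of $k$-RLL vectors in $\Sigma_q^n$. *)

theory Defs
  imports Complex_Main
begin

text \<open>The run length k is an integer
  (it arises as ceiling(log_q n) + z); for k \<le> 0 the empty run is always present.\<close>

definition has_zero_run :: "nat list \<Rightarrow> nat \<Rightarrow> bool" where
  "has_zero_run xs k \<longleftrightarrow> (\<exists>i. i + k \<le> length xs \<and> (\<forall>j<k. xs ! (i + j) = 0))"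

definition is_RLL :: "nat list \<Rightarrow> int \<Rightarrow> bool" where
  "is_RLL xs k \<longleftrightarrow> int (length xs) < k \<or> \<not> has_zero_run xs (nat k)"

definition a_q :: "nat \<Rightarrow> nat \<Rightarrow> int \<Rightarrow> nat" where
  "a_q q n k = card {xs. length xs = n \<and> set xs \<subseteq> {0..<q} \<and> is_RLL xs k}"

end

theory Submission
  imports Defs
begin

text \<open>Splitting a vector at its first nonzero entry gives
  a_q(n+1, k) = q a_q(n, k) - (q - 1) a_q(n - k, k), so f n = a_q(n, k) / q^n satisfies the delay
  recurrence f (n + 1) = f n - \<epsilon> f (n - k) with \<epsilon> = (q - 1) / q^(k+1). As f decreases,
  f n \<le> (1 - \<epsilon>)^(n-k) \<le> e^(k\<epsilon>) e^(-n\<epsilon>). Conversely, once k\<epsilon> + q^-k is small, an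
  induction shows f (m - k) \<le> \<beta> f m with \<beta> = 1 + O(k\<epsilon> + q^-k), whence
  f n \<ge> (1 - q^-k)(1 - \<epsilon>\<beta>)^n. For k = \<lceil>log_q n\<rceil> + z the exponent
  n\<epsilon> = (q - 1) q^(\<Delta>_n - z - 1) stays bounded while k\<epsilon> and q^-k tend to 0, so both bounds
  are e^(-n\<epsilon>) (1 + o(1)).\<close>

lemma has_zero_run_length_le: "has_zero_run xs k \<Longrightarrow> k \<le> length xs"
  unfolding has_zero_run_def by auto

lemma has_zero_run_replicate: "k \<le> n \<Longrightarrow> has_zero_run (replicate n 0) k"
  unfolding has_zero_run_def by (intro exI[of _ 0]) auto

lemma has_zero_run_Cons:
  "has_zero_run (x # xs) k \<longleftrightarrow>
     (k \<le> Suc (length xs) \<and> (\<forall>j<k. (x # xs) ! j = 0)) \<or> has_zero_run xs k"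
proof
  assume "has_zero_run (x # xs) k"
  then obtain i where i: "i + k \<le> Suc (length xs)" "\<forall>j<k. (x # xs) ! (i + j) = 0"
    unfolding has_zero_run_def by auto
  show "(k \<le> Suc (length xs) \<and> (\<forall>j<k. (x # xs) ! j = 0)) \<or> has_zero_run xs k"
  proof (cases i)
    case 0
    then show ?thesis using i by auto
  next
    case (Suc i')
    then show ?thesis using i unfolding has_zero_run_def by (intro disjI2 exI[of _ i']) auto
  qed
next
  assume "(k \<le> Suc (length xs) \<and> (\<forall>j<k. (x # xs) ! j = 0)) \<or> has_zero_run xs k"
  then show "has_zero_run (x # xs) k"
    unfolding has_zero_run_def by (auto intro: exI[of _ 0] exI[of _ "Suc _"])
qed

lemma has_zero_run_replicate_Cons:
  assumes "c \<noteq> 0" "1 \<le> k"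
  shows "has_zero_run (replicate j 0 @ c # xs) k \<longleftrightarrow> k \<le> j \<or> has_zero_run xs k"
proof (induction j)
  case 0
  have "(c # xs) ! 0 \<noteq> 0" using assms(1) by simp
  then show ?case using has_zero_run_Cons[of c xs k] assms(2) by auto
next
  case (Suc j)
  have leading_zeros: "(\<forall>i<k. (0 # replicate j 0 @ c # xs) ! i = 0) \<longleftrightarrow> k \<le> Suc j"
  proof
    assume zeros: "\<forall>i<k. (0 # replicate j 0 @ c # xs) ! i = 0"
    show "k \<le> Suc j"
    proof (rule ccontr)
      assume "\<not> k \<le> Suc j"
      then have "(replicate j 0 @ c # xs) ! j = 0" using zeros[rule_format, of "Suc j"] by simp
      then show False using assms(1) by (simp add: nth_append)
    qed
  qed (auto simp: nth_append nth_Cons')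
  have unfold_zero: "replicate (Suc j) 0 @ c # xs = 0 # (replicate j 0 @ c # xs)" by simp
  show ?case
    unfolding unfold_zero has_zero_run_Cons leading_zeros Suc.IH by auto
qed

lemma replicate_zero_Cons_eqD:
  "replicate j 0 @ c # ys = replicate j' 0 @ c' # ys' \<Longrightarrow> c \<noteq> 0 \<Longrightarrow> c' \<noteq> 0 \<Longrightarrow> j = j'"
proof (induction j arbitrary: j')
  case 0
  then show ?case by (cases j') auto
next
  case (Suc j)
  then show ?case by (cases j') auto
qed

definition RLL :: "nat \<Rightarrow> nat \<Rightarrow> nat \<Rightarrow> nat list set" where
  "RLL q k n = {xs. length xs = n \<and> set xs \<subseteq> {0..<q} \<and> \<not> has_zero_run xs k}"

lemma finite_RLL: "finite (RLL q k n)"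
  by (rule finite_subset[OF _ finite_lists_length_eq[of "{0..<q}" n]]) (auto simp: RLL_def)

lemma a_q_eq_card_RLL:
  assumes "1 \<le> k"
  shows "a_q q n k = card (RLL q (nat k) n)"
proof -
  have "is_RLL xs k \<longleftrightarrow> \<not> has_zero_run xs (nat k)" for xs
    using has_zero_run_length_le[of xs "nat k"] assms unfolding is_RLL_def by auto
  then show ?thesis unfolding a_q_def RLL_def by simp
qed

lemma card_RLL_short: "n < k \<Longrightarrow> card (RLL q k n) = q ^ n"
proof -
  assume "n < k"
  then have "RLL q k n = {xs. set xs \<subseteq> {0..<q} \<and> length xs = n}"
    unfolding RLL_def using has_zero_run_length_le by fastforce
  then show ?thesis using card_lists_length_eq[of "{0..<q}" n] by simp
qed

lemma RLL_eq_UN: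
  assumes "1 \<le> k" "k \<le> n"
  shows "RLL q k n =
    (\<Union>j<k. (\<lambda>(c, ys). replicate j 0 @ c # ys) ` ({1..<q} \<times> RLL q k (n - 1 - j)))"
    (is "_ = ?U")
proof
  show "RLL q k n \<subseteq> ?U"
  proof
    fix xs assume xs: "xs \<in> RLL q k n"
    have "\<not> (\<forall>y\<in>set xs. y = 0)"
    proof
      assume "\<forall>y\<in>set xs. y = 0"
      then have "xs = replicate n 0" using xs replicate_length_same[of xs 0] by (simp add: RLL_def)
      then show False using xs has_zero_run_replicate[OF assms(2)] by (simp add: RLL_def)
    qed
    then have "\<exists>x\<in>set xs. x \<noteq> 0" by blast
    then obtain zs c ys where split: "xs = zs @ c # ys" "c \<noteq> 0" "\<forall>y\<in>set zs. y = 0"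
      by (rule split_list_first_propE) auto
    define j where "j = length zs"
    have xs_eq: "xs = replicate j 0 @ c # ys"
      using split replicate_length_same[of zs 0] unfolding j_def by simp
    have "\<not> (k \<le> j \<or> has_zero_run ys k)"
      using xs has_zero_run_replicate_Cons[OF split(2) assms(1)] unfolding xs_eq RLL_def by auto
    moreover have "c < q" "set ys \<subseteq> {0..<q}" "length ys = n - 1 - j"
      using xs unfolding xs_eq RLL_def by auto
    ultimately show "xs \<in> ?U"
      using split(2) unfolding xs_eq RLL_def by (auto intro!: bexI[of _ j] image_eqI[of _ _ "(c, ys)"])
  qed
next
  show "?U \<subseteq> RLL q k n"
    using has_zero_run_replicate_Cons assms unfolding RLL_def by fastforce
qed

lemma card_RLL_rec:
  assumes "1 \<le> k" "k \<le> n"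
  shows "card (RLL q k n) = (q - 1) * (\<Sum>j<k. card (RLL q k (n - 1 - j)))"
proof -
  let ?block = "\<lambda>j. (\<lambda>(c, ys). replicate j 0 @ c # ys) ` ({1..<q} \<times> RLL q k (n - 1 - j))"
  have disjoint: "?block i \<inter> ?block j = {}" if "i \<noteq> j" for i j
    using that by (force dest: replicate_zero_Cons_eqD)
  have "card (RLL q k n) = (\<Sum>j<k. card (?block j))"
    unfolding RLL_eq_UN[OF assms]
    by (rule card_UN_disjoint) (use finite_RLL disjoint in auto)
  also have "\<dots> = (\<Sum>j<k. (q - 1) * card (RLL q k (n - 1 - j)))"
  proof (rule sum.cong[OF refl])
    fix j
    have "inj_on (\<lambda>(c, ys). replicate j 0 @ c # ys) ({1..<q} \<times> RLL q k (n - 1 - j))"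
      by (rule inj_onI) auto
    then show "card (?block j) = (q - 1) * card (RLL q k (n - 1 - j))"
      by (simp add: card_image card_cartesian_product)
  qed
  finally show ?thesis by (simp add: sum_distrib_left)
qed

lemma card_RLL_self:
  assumes "1 \<le> k" "1 \<le> q"
  shows "real (card (RLL q k k)) = real q ^ k - 1"
proof -
  have "card (RLL q k k) = (q - 1) * (\<Sum>j<k. q ^ (k - Suc j))"
    using card_RLL_rec[of k k q] card_RLL_short assms(1) by simp
  also have "(\<Sum>j<k. q ^ (k - Suc j)) = (\<Sum>j<k. q ^ j)"
    by (rule sum.nat_diff_reindex)
  finally have "real (card (RLL q k k)) = (real q - 1) * (\<Sum>j<k. real q ^ j)"
    using assms(2) by (simp add: of_nat_diff)
  also have "\<dots> = real q ^ k - 1"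
    using power_diff_1_eq[of "real q" k] by simp
  finally show ?thesis .
qed

text \<open>Subtracting the recurrence at n from the one at n + 1 leaves a two-term recurrence.\<close>

lemma card_RLL_Suc:
  assumes "1 \<le> k" "k \<le> n" "1 \<le> q"
  shows "real (card (RLL q k (Suc n))) =
    real q * real (card (RLL q k n)) - (real q - 1) * real (card (RLL q k (n - k)))"
proof -
  define c where "c m = real (card (RLL q k m))" for m
  obtain p where k: "k = Suc p" using assms(1) by (cases k) auto
  define X where "X = (\<Sum>j<p. c (n - 1 - j))"
  have "c (Suc n) = (real q - 1) * (\<Sum>j<k. c (n - j))"
    using card_RLL_rec[of k "Suc n" q] assms unfolding c_def by (simp add: of_nat_diff)
  also have "(\<Sum>j<k. c (n - j)) = c n + X"
    unfolding k X_def sum.lessThan_Suc_shift by simp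
  finally have next_step: "c (Suc n) = (real q - 1) * c n + (real q - 1) * X"
    by (simp add: distrib_left)
  have "c n = (real q - 1) * (\<Sum>j<k. c (n - 1 - j))"
    using card_RLL_rec[of k n q] assms unfolding c_def by (simp add: of_nat_diff)
  also have "(\<Sum>j<k. c (n - 1 - j)) = X + c (n - k)"
    unfolding k X_def sum.lessThan_Suc by simp
  finally have this_step: "c n = (real q - 1) * X + (real q - 1) * c (n - k)"
    by (simp add: distrib_left)
  from this_step have "(real q - 1) * X = c n - (real q - 1) * c (n - k)"
    by simp
  with next_step have "c (Suc n) = real q * c n - (real q - 1) * c (n - k)"
    by (simp add: algebra_simps)
  then show ?thesis unfolding c_def .
qed

lemma ratio_steps_iterate:
  fixes g :: "nat \<Rightarrow> real"
  assumes "\<And>i. a \<le> i \<Longrightarrow> i < a + d \<Longrightarrow> r * g i \<le> g (Suc i)" "0 \<le> r"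
  shows "r ^ d * g a \<le> g (a + d)"
  using assms(1)
proof (induction d)
  case 0
  then show ?case by simp
next
  case (Suc d)
  then have "r * (r ^ d * g a) \<le> r * g (a + d)"
    using assms(2) by (intro mult_left_mono) auto
  also have "\<dots> \<le> g (Suc (a + d))"
    using Suc.prems by auto
  finally show ?case by (simp add: mult.assoc)
qed

lemma exp_neg_le_one_minus:
  fixes x :: real
  assumes "0 \<le> x" "x < 1"
  shows "exp (- (x / (1 - x))) \<le> 1 - x"
proof -
  have "1 / (1 - x) = 1 + x / (1 - x)"
    using assms by (simp add: field_simps)
  also have "\<dots> \<le> exp (x / (1 - x))"
    by (rule exp_ge_add_one_self)
  finally show ?thesis
    using assms by (simp add: exp_minus field_simps)
qed

text \<open>The factor \<beta> in the bound f (m - k) \<le> \<beta> f m for the delay recurrence below;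
  lag_ratio_bound_ineq is exactly what makes the induction close.\<close>

definition lag_ratio_bound :: "nat \<Rightarrow> real \<Rightarrow> real \<Rightarrow> real" where
  "lag_ratio_bound k \<epsilon> \<delta> = 1 + 4 * (real k * \<epsilon> + \<delta>)"

lemma lag_ratio_bound_bounds:
  fixes \<epsilon> \<delta> :: real
  assumes "1 \<le> k" "0 \<le> \<epsilon>" "0 \<le> \<delta>" "real k * \<epsilon> + \<delta> \<le> 1/4"
  shows "1 \<le> lag_ratio_bound k \<epsilon> \<delta>" "lag_ratio_bound k \<epsilon> \<delta> \<le> 2"
    and "0 \<le> \<epsilon> * lag_ratio_bound k \<epsilon> \<delta>" "\<epsilon> * lag_ratio_bound k \<epsilon> \<delta> \<le> 1/2"
proof -
  have "0 \<le> real k * \<epsilon>" "\<epsilon> \<le> real k * \<epsilon>"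
    using assms(1,2) by (simp_all add: mult_le_cancel_right1)
  then show "1 \<le> lag_ratio_bound k \<epsilon> \<delta>" "lag_ratio_bound k \<epsilon> \<delta> \<le> 2"
    using assms(3,4) unfolding lag_ratio_bound_def by auto
  then show "0 \<le> \<epsilon> * lag_ratio_bound k \<epsilon> \<delta>"
    using assms(2) by simp
  have "\<epsilon> * lag_ratio_bound k \<epsilon> \<delta> \<le> 1/4 * 2"
    using \<open>\<epsilon> \<le> real k * \<epsilon>\<close> \<open>1 \<le> lag_ratio_bound k \<epsilon> \<delta>\<close>
      \<open>lag_ratio_bound k \<epsilon> \<delta> \<le> 2\<close> assms(3,4)
    by (intro mult_mono) auto
  then show "\<epsilon> * lag_ratio_bound k \<epsilon> \<delta> \<le> 1/2" by simp
qed

lemma lag_ratio_bound_ineq: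
  fixes \<epsilon> \<delta> :: real
  assumes "1 \<le> k" "0 \<le> \<epsilon>" "0 \<le> \<delta>" "real k * \<epsilon> + \<delta> \<le> 1/4"
  defines "\<beta> \<equiv> lag_ratio_bound k \<epsilon> \<delta>"
  shows "1 \<le> \<beta> * (1 - \<delta>) * (1 - \<epsilon> * \<beta>) ^ k"
proof -
  define t where "t = real k * \<epsilon> + \<delta>"
  note \<beta> = lag_ratio_bound_bounds[OF assms(1-4), folded \<beta>_def]
  have "0 \<le> real k * \<epsilon>"
    using assms(2) by simp
  have bernoulli: "1 - real k * (\<epsilon> * \<beta>) \<le> (1 - \<epsilon> * \<beta>) ^ k"
    using Bernoulli_inequality[of "- (\<epsilon> * \<beta>)" k] \<beta>(4) by simp
  have "1 \<le> \<beta> * (1 - 2 * t)"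
  proof -
    have "0 \<le> 2 * t * (1 - 4 * t)"
      using assms(2,3,4) unfolding t_def by simp
    then show ?thesis unfolding \<beta>_def lag_ratio_bound_def t_def by (simp add: algebra_simps)
  qed
  also have "\<dots> \<le> \<beta> * ((1 - \<delta>) * (1 - real k * (\<epsilon> * \<beta>)))"
  proof (rule mult_left_mono)
    have "real k * \<epsilon> * \<beta> \<le> real k * \<epsilon> * 2"
      using \<beta>(2) \<open>0 \<le> real k * \<epsilon>\<close> by (intro mult_left_mono)
    moreover have "0 \<le> \<delta> * (real k * \<epsilon> * \<beta>)"
      using assms(3) \<beta>(1) \<open>0 \<le> real k * \<epsilon>\<close> by simp
    ultimately show "1 - 2 * t \<le> (1 - \<delta>) * (1 - real k * (\<epsilon> * \<beta>))"
      using assms(3) unfolding t_def by (simp add: algebra_simps)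
  qed (use \<beta> in simp)
  also have "\<dots> \<le> \<beta> * ((1 - \<delta>) * (1 - \<epsilon> * \<beta>) ^ k)"
    using bernoulli \<beta>(1) \<open>0 \<le> real k * \<epsilon>\<close> assms(4) by (intro mult_left_mono) auto
  finally show ?thesis by (simp add: mult.assoc)
qed

text \<open>The normalised counts f n = a_q(n, k) / q^n satisfy this delay recurrence with
  \<epsilon> = (q - 1) / q^(k+1) and \<delta> = q^-k.\<close>

locale delay_recurrence =
  fixes f :: "nat \<Rightarrow> real" and k :: nat and \<epsilon> \<delta> :: real
  assumes k_pos: "1 \<le> k" and eps_nonneg: "0 \<le> \<epsilon>" and delta_nonneg: "0 \<le> \<delta>"
    and initial: "\<And>n. n < k \<Longrightarrow> f n = 1"
    and at_k: "f k = 1 - \<delta>"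
    and recurrence: "\<And>n. k \<le> n \<Longrightarrow> f (Suc n) = f n - \<epsilon> * f (n - k)"
    and nonneg: "\<And>n. 0 \<le> f n"
begin

lemma eps_le_one: "\<epsilon> \<le> 1"
  using nonneg[of "Suc k"] recurrence[of k] at_k initial[of 0] k_pos delta_nonneg by simp

lemma f_Suc_le: "f (Suc n) \<le> f n"
proof -
  consider "Suc n < k" | "Suc n = k" | "k \<le> n" by linarith
  then show ?thesis
  proof cases
    case 3
    then show ?thesis using recurrence eps_nonneg nonneg by simp
  qed (use initial at_k delta_nonneg in auto)
qed

lemma f_antimono: "m \<le> n \<Longrightarrow> f n \<le> f m"
  using f_Suc_le by (metis decseq_SucI decseqD)

lemma upper_bound: "f n \<le> (1 - \<epsilon>) ^ (n - k)"
proof (induction n)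
  case 0
  then show ?case using initial k_pos by simp
next
  case (Suc n)
  show ?case
  proof (cases "k \<le> n")
    case True
    have "f (Suc n) \<le> f n - \<epsilon> * f n"
      using recurrence[OF True] f_antimono[of "n - k" n] eps_nonneg by (simp add: mult_left_mono)
    also have "\<dots> = (1 - \<epsilon>) * f n"
      by (simp add: algebra_simps)
    also have "\<dots> \<le> (1 - \<epsilon>) * (1 - \<epsilon>) ^ (n - k)"
      using Suc.IH eps_le_one by (intro mult_left_mono) auto
    finally show ?thesis using True by (simp add: Suc_diff_le)
  next
    case False
    then show ?thesis using f_antimono[of 0 "Suc n"] initial k_pos by simp
  qed
qed

lemma upper_bound_exp: "f n * exp (real n * \<epsilon>) \<le> exp (real k * \<epsilon>)"
proof -
  have "(1 - \<epsilon>) ^ (n - k) \<le> exp (- \<epsilon>) ^ (n - k)"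
    using exp_ge_add_one_self[of "- \<epsilon>"] eps_le_one by (intro power_mono) auto
  with upper_bound have "f n \<le> exp (- \<epsilon>) ^ (n - k)"
    by (rule order_trans)
  also have "\<dots> = exp (- (real (n - k) * \<epsilon>))"
    by (simp add: exp_of_nat_mult[symmetric])
  finally have "f n * exp (real n * \<epsilon>) \<le> exp (- (real (n - k) * \<epsilon>)) * exp (real n * \<epsilon>)"
    by (simp add: mult_right_mono)
  also have "\<dots> \<le> exp (real k * \<epsilon>)"
  proof -
    have "real n - real k \<le> real (n - k)" by linarith
    then have "(real n - real k) * \<epsilon> \<le> real (n - k) * \<epsilon>"
      using eps_nonneg by (intro mult_right_mono)
    then show ?thesis unfolding exp_add[symmetric] by (simp add: algebra_simps)
  qed
  finally show ?thesis .
qed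

text \<open>Dividing f by 1 - \<delta> from index k on removes the drop of f at k, after which the scaled
  sequence decreases at most by the factor 1 - \<epsilon> \<beta> per step.\<close>

definition scaled :: "nat \<Rightarrow> real" where
  "scaled m = (if m < k then f m else f m / (1 - \<delta>))"

context
  fixes \<beta> :: real
  assumes small: "real k * \<epsilon> + \<delta> \<le> 1/4"
  defines "\<beta> \<equiv> lag_ratio_bound k \<epsilon> \<delta>"
begin

lemma delta_le: "\<delta> \<le> 1/4"
proof -
  have "0 \<le> real k * \<epsilon>"
    using eps_nonneg by simp
  then show ?thesis using small by linarith
qed

lemma f_le_scaled: "f m \<le> scaled m"
  using nonneg[of m] delta_le delta_nonneg
  by (auto simp: scaled_def divide_simps mult_left_le)

lemma scaled_step: "(1 - \<epsilon> * \<beta>) * scaled m \<le> scaled (Suc m)"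
proof (induction m rule: less_induct)
  case (less m)
  note \<beta> = lag_ratio_bound_bounds[OF k_pos eps_nonneg delta_nonneg small, folded \<beta>_def]
  define \<rho> where "\<rho> = 1 - \<epsilon> * \<beta>"
  define c where "c = 1 - \<delta>"
  have \<rho>: "0 \<le> \<rho>" "\<rho> \<le> 1" and c: "0 < c"
    using \<beta> delta_le unfolding \<rho>_def c_def by auto
  consider "Suc m < k" | "Suc m = k" | "k \<le> m" by linarith
  then show ?case
  proof cases
    case 3
    have "\<rho> ^ k * scaled (m - k) \<le> scaled (m - k + k)"
      by (rule ratio_steps_iterate) (use less \<rho> 3 in \<open>auto simp: \<rho>_def\<close>)
    then have lag: "\<rho> ^ k * scaled (m - k) \<le> f m / c"
      using 3 unfolding scaled_def c_def by simp
    have "f (m - k) \<le> \<beta> * c * (\<rho> ^ k * f (m - k))"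
      using lag_ratio_bound_ineq[OF k_pos eps_nonneg delta_nonneg small] nonneg[of "m - k"]
      unfolding \<beta>_def \<rho>_def c_def by (simp add: mult_le_cancel_right1 mult.assoc[symmetric])
    also have "\<dots> \<le> \<beta> * c * (\<rho> ^ k * scaled (m - k))"
      using f_le_scaled \<beta> \<rho> c by (intro mult_left_mono) auto
    also have "\<dots> \<le> \<beta> * f m"
      using mult_left_mono[OF lag, of "\<beta> * c"] \<beta> c by simp
    finally have "\<epsilon> * f (m - k) \<le> \<epsilon> * (\<beta> * f m)"
      using eps_nonneg by (rule mult_left_mono)
    then have "\<rho> * f m \<le> f (Suc m)"
      using recurrence[OF 3] unfolding \<rho>_def by (simp add: algebra_simps)
    then show ?thesis
      using 3 c unfolding scaled_def c_def \<rho>_def by (simp add: divide_right_mono)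
  qed (use initial at_k \<rho> delta_le in \<open>auto simp: scaled_def \<rho>_def\<close>)
qed

lemma lower_bound: "(1 - \<delta>) * (1 - \<epsilon> * \<beta>) ^ n \<le> f n"
proof -
  have "(1 - \<epsilon> * \<beta>) ^ n * scaled 0 \<le> scaled n"
    using ratio_steps_iterate[of 0 n "1 - \<epsilon> * \<beta>" scaled] scaled_step
      lag_ratio_bound_bounds[OF k_pos eps_nonneg delta_nonneg small]
    by (simp add: \<beta>_def)
  then have "(1 - \<epsilon> * \<beta>) ^ n \<le> scaled n"
    using initial k_pos unfolding scaled_def by simp
  then have "(1 - \<delta>) * (1 - \<epsilon> * \<beta>) ^ n \<le> (1 - \<delta>) * scaled n"
    using delta_le by (intro mult_left_mono) auto
  also have "\<dots> \<le> f n"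
    using delta_le nonneg[of n] delta_nonneg
    by (cases "n < k") (auto simp: scaled_def mult_left_le_one_le)
  finally show ?thesis .
qed

lemma lower_bound_exp:
  assumes "real n * \<epsilon> \<le> C"
  shows "(1 - \<delta>) * exp (- C * (\<beta> / (1 - \<epsilon> * \<beta>) - 1)) \<le> f n * exp (real n * \<epsilon>)"
proof -
  note \<beta> = lag_ratio_bound_bounds[OF k_pos eps_nonneg delta_nonneg small, folded \<beta>_def]
  define x where "x = \<epsilon> * \<beta>"
  have x: "0 \<le> x" "x \<le> 1/2"
    using \<beta> unfolding x_def by auto
  have excess: "0 \<le> \<beta> / (1 - x) - 1"
    using \<beta> x by (simp add: le_divide_eq)
  have "exp (- (real n * (x / (1 - x)))) = exp (- (x / (1 - x))) ^ n"
    by (simp add: exp_of_nat_mult[symmetric])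
  also have "\<dots> \<le> (1 - x) ^ n"
    using exp_neg_le_one_minus[of x] x by (intro power_mono) auto
  finally have "(1 - \<delta>) * exp (- (real n * (x / (1 - x)))) \<le> (1 - \<delta>) * (1 - x) ^ n"
    using delta_le by (intro mult_left_mono) auto
  also have "\<dots> \<le> f n"
    using lower_bound[of n] unfolding x_def .
  finally have lower: "(1 - \<delta>) * exp (- (real n * (x / (1 - x)))) \<le> f n" .
  have "(1 - \<delta>) * exp (- C * (\<beta> / (1 - x) - 1))
      \<le> (1 - \<delta>) * exp (- (real n * \<epsilon>) * (\<beta> / (1 - x) - 1))"
    using assms excess delta_le by (intro mult_left_mono) (auto intro: mult_right_mono)
  also have "\<dots> = (1 - \<delta>) * exp (- (real n * (x / (1 - x)))) * exp (real n * \<epsilon>)"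
  proof -
    have exponent: "- (real n * \<epsilon>) * (\<beta> / (1 - x) - 1) = - (real n * (x / (1 - x))) + real n * \<epsilon>"
      using x unfolding x_def by (simp add: field_simps)
    show ?thesis by (simp only: exponent mult.assoc exp_add[symmetric])
  qed
  also have "\<dots> \<le> f n * exp (real n * \<epsilon>)"
    using lower by (intro mult_right_mono) auto
  finally show ?thesis unfolding x_def .
qed

end

end

definition rll_eps :: "nat \<Rightarrow> nat \<Rightarrow> real" where
  "rll_eps q k = (real q - 1) / real q ^ (k + 1)"

lemma rll_eps_bounds:
  assumes "1 \<le> q"
  shows "0 \<le> rll_eps q k" "rll_eps q k \<le> 1 / real q ^ k"
proof -
  show "0 \<le> rll_eps q k"
    using assms unfolding rll_eps_def by simp
  have "rll_eps q k \<le> real q / real q ^ (k + 1)"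
    using assms unfolding rll_eps_def by (intro divide_right_mono) auto
  then show "rll_eps q k \<le> 1 / real q ^ k"
    using assms by simp
qed

lemma delay_recurrence_RLL:
  assumes "2 \<le> q" "1 \<le> k"
  shows "delay_recurrence (\<lambda>n. real (card (RLL q k n)) / real q ^ n) k (rll_eps q k) (1 / real q ^ k)"
proof
  show "1 \<le> k" "0 \<le> rll_eps q k" "0 \<le> 1 / real q ^ k"
    using assms rll_eps_bounds[of q k] by auto
  show "real (card (RLL q k n)) / real q ^ n = 1" if "n < k" for n
    using card_RLL_short[OF that, of q] assms by simp
  show "real (card (RLL q k k)) / real q ^ k = 1 - 1 / real q ^ k"
    using card_RLL_self[OF assms(2), of q] assms by (simp add: field_simps)
  show "0 \<le> real (card (RLL q k n)) / real q ^ n" for n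
    by simp
  show "real (card (RLL q k (Suc n))) / real q ^ Suc n =
    real (card (RLL q k n)) / real q ^ n -
    rll_eps q k * (real (card (RLL q k (n - k))) / real q ^ (n - k))"
    if "k \<le> n" for n
  proof -
    have "real q ^ Suc n = real q ^ (k + 1) * real q ^ (n - k)"
      using that by (simp flip: power_add)
    then show ?thesis
      using card_RLL_Suc[OF assms(2) that, of q] assms
      by (simp add: rll_eps_def field_simps)
  qed
qed

lemma tendsto_rll_params:
  assumes "2 \<le> q"
  defines "\<beta> \<equiv> \<lambda>k. lag_ratio_bound k (rll_eps q k) (1 / real q ^ k)"
  shows "(\<lambda>k. real k * rll_eps q k + 1 / real q ^ k) \<longlonglongrightarrow> 0"
    and "(\<lambda>k. (1 - 1 / real q ^ k) * exp (- C * (\<beta> k / (1 - rll_eps q k * \<beta> k) - 1)))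
      \<longlonglongrightarrow> 1"
    and "(\<lambda>k. exp (real k * rll_eps q k)) \<longlonglongrightarrow> 1"
proof -
  have q: "1 \<le> q" using assms(1) by simp
  have inverse_powers: "(\<lambda>k. 1 / real q ^ k) \<longlonglongrightarrow> 0"
    using LIMSEQ_realpow_zero[of "1 / real q"] assms(1) by (simp add: power_one_over)
  have eps: "(\<lambda>k. rll_eps q k) \<longlonglongrightarrow> 0"
    by (rule tendsto_sandwich[OF _ _ tendsto_const inverse_powers])
      (use rll_eps_bounds[OF q] in auto)
  have k_eps: "(\<lambda>k. real k * rll_eps q k) \<longlonglongrightarrow> 0"
  proof (rule tendsto_sandwich[OF _ _ tendsto_const])
    show "(\<lambda>k. real k / real q ^ k) \<longlonglongrightarrow> 0"
      using lim_n_over_pown[of "real q"] assms(1) by simp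
    have "real k * rll_eps q k \<le> real k * (1 / real q ^ k)" for k
      using rll_eps_bounds[OF q] by (intro mult_left_mono) auto
    then show "\<forall>\<^sub>F k in sequentially. real k * rll_eps q k \<le> real k / real q ^ k"
      by (simp add: always_eventually)
  qed (use rll_eps_bounds[OF q] in auto)
  show small: "(\<lambda>k. real k * rll_eps q k + 1 / real q ^ k) \<longlonglongrightarrow> 0"
    using tendsto_add[OF k_eps inverse_powers] by simp
  have "(\<lambda>k. 1 + 4 * (real k * rll_eps q k + 1 / real q ^ k)) \<longlonglongrightarrow> 1 + 4 * 0"
    by (intro tendsto_intros small)
  then have "\<beta> \<longlonglongrightarrow> 1"
    unfolding \<beta>_def lag_ratio_bound_def by simp
  then have "(\<lambda>k. \<beta> k / (1 - rll_eps q k * \<beta> k) - 1) \<longlonglongrightarrow> 1 / (1 - 0 * 1) - 1"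
    by (intro tendsto_intros eps) auto
  then have "(\<lambda>k. \<beta> k / (1 - rll_eps q k * \<beta> k) - 1) \<longlonglongrightarrow> 0"
    by simp
  then have "(\<lambda>k. (1 - 1 / real q ^ k) * exp (- C * (\<beta> k / (1 - rll_eps q k * \<beta> k) - 1)))
      \<longlonglongrightarrow> (1 - 0) * exp (- C * 0)"
    by (rule tendsto_mult[OF tendsto_diff[OF tendsto_const inverse_powers]
          tendsto_exp[OF tendsto_mult[OF tendsto_const]]])
  then show "(\<lambda>k. (1 - 1 / real q ^ k) * exp (- C * (\<beta> k / (1 - rll_eps q k * \<beta> k) - 1)))
      \<longlonglongrightarrow> 1"
    by simp
  show "(\<lambda>k. exp (real k * rll_eps q k)) \<longlonglongrightarrow> 1"
    using tendsto_exp[OF k_eps] by simp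
qed

lemma card_RLL_ratio_bounds:
  assumes "2 \<le> q" "1 \<le> k" "real k * rll_eps q k + 1 / real q ^ k \<le> 1/4"
    and "real n * rll_eps q k \<le> C"
  defines "\<beta> \<equiv> lag_ratio_bound k (rll_eps q k) (1 / real q ^ k)"
  shows "(1 - 1 / real q ^ k) * exp (- C * (\<beta> / (1 - rll_eps q k * \<beta>) - 1))
      \<le> real (card (RLL q k n)) / (real q ^ n * exp (- (real n * rll_eps q k)))"
    and "real (card (RLL q k n)) / (real q ^ n * exp (- (real n * rll_eps q k)))
      \<le> exp (real k * rll_eps q k)"
proof -
  interpret delay_recurrence "\<lambda>m. real (card (RLL q k m)) / real q ^ m" k "rll_eps q k" "1 / real q ^ k"
    using delay_recurrence_RLL assms(1,2) .
  have ratio: "real (card (RLL q k n)) / (real q ^ n * exp (- (real n * rll_eps q k)))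
      = real (card (RLL q k n)) / real q ^ n * exp (real n * rll_eps q k)"
    by (simp add: exp_minus field_simps)
  show "(1 - 1 / real q ^ k) * exp (- C * (\<beta> / (1 - rll_eps q k * \<beta>) - 1))
      \<le> real (card (RLL q k n)) / (real q ^ n * exp (- (real n * rll_eps q k)))"
    using lower_bound_exp[OF assms(3,4)] unfolding ratio \<beta>_def by simp
  show "real (card (RLL q k n)) / (real q ^ n * exp (- (real n * rll_eps q k)))
      \<le> exp (real k * rll_eps q k)"
    using upper_bound_exp[of n] unfolding ratio by simp
qed

text \<open>k n = \<lceil>log_q n\<rceil> + z is one regime where k n \<rightarrow> \<infinity> and n \<epsilon>_(k n) stays bounded.\<close>

lemma tendsto_card_RLL_ratio:
  assumes q: "2 \<le> q" and k: "filterlim k at_top sequentially"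
    and bounded: "eventually (\<lambda>n. real n * rll_eps q (k n) \<le> C) sequentially"
  shows "(\<lambda>n. real (card (RLL q (k n) n)) / (real q ^ n * exp (- (real n * rll_eps q (k n)))))
    \<longlonglongrightarrow> 1"
proof -
  have "eventually (\<lambda>k. real k * rll_eps q k + 1 / real q ^ k < 1/4) sequentially"
    by (rule order_tendstoD(2)[OF tendsto_rll_params(1)[OF q]]) simp
  with eventually_ge_at_top[of 1]
  have "eventually (\<lambda>k. 1 \<le> k \<and> real k * rll_eps q k + 1 / real q ^ k \<le> 1/4) sequentially"
    by eventually_elim auto
  then have "eventually (\<lambda>n. 1 \<le> k n \<and> real (k n) * rll_eps q (k n) + 1 / real q ^ k n \<le> 1/4)
      sequentially"
    using k unfolding filterlim_iff by blast
  with bounded have good: "eventually (\<lambda>n. 1 \<le> k n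
      \<and> real (k n) * rll_eps q (k n) + 1 / real q ^ k n \<le> 1/4 \<and> real n * rll_eps q (k n) \<le> C)
      sequentially"
    by eventually_elim blast
  show ?thesis
    by (rule tendsto_sandwich[OF _ _ filterlim_compose[OF tendsto_rll_params(2)[OF q] k]
          filterlim_compose[OF tendsto_rll_params(3)[OF q] k]])
      (use good in \<open>eventually_elim, use card_RLL_ratio_bounds[OF q] in blast\<close>)+
qed

lemma filterlim_nat_ceiling_log:
  assumes "1 < b"
  shows "filterlim (\<lambda>n. nat (\<lceil>log b (real n)\<rceil> + z)) at_top sequentially"
  unfolding filterlim_at_top
proof
  fix m :: nat
  show "eventually (\<lambda>n. m \<le> nat (\<lceil>log b (real n)\<rceil> + z)) sequentially"
    using eventually_ge_at_top[of "nat \<lceil>b powr (real m + \<bar>z\<bar>)\<rceil> + 1"]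
  proof eventually_elim
    case (elim n)
    then have "b powr (real m + \<bar>z\<bar>) \<le> real n" "0 < real n"
      by linarith+
    then have "real m + \<bar>z\<bar> \<le> log b (real n)"
      using le_log_iff[OF assms] by blast
    then show ?case
      by linarith
  qed
qed

lemma powr_log_minus_ceiling:
  fixes Q x :: real and z :: int
  assumes "1 < Q" "0 < x" "0 \<le> \<lceil>log Q x\<rceil> + z"
  shows "Q powr ((log Q x - \<lceil>log Q x\<rceil>) - z - 1) = x / Q ^ (nat (\<lceil>log Q x\<rceil> + z) + 1)"
proof -
  define m where "m = nat (\<lceil>log Q x\<rceil> + z) + 1"
  have "(log Q x - \<lceil>log Q x\<rceil>) - z - 1 = log Q x - real m"
    using assms(3) unfolding m_def by simp
  then have "Q powr ((log Q x - \<lceil>log Q x\<rceil>) - z - 1) = Q powr log Q x / Q powr real m"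
    by (simp only: powr_diff)
  also have "\<dots> = x / Q ^ m"
    using assms(1,2) by (simp add: powr_realpow)
  finally show ?thesis unfolding m_def .
qed

lemma rll_exponent_eq:
  fixes q n :: nat and z :: int
  assumes "2 \<le> q" "1 \<le> n" "1 \<le> \<lceil>log q n\<rceil> + z"
  shows "(real q - 1) * real q powr ((log q n - \<lceil>log q n\<rceil>) - z - 1)
    = real n * rll_eps q (nat (\<lceil>log q n\<rceil> + z))"
  using assms powr_log_minus_ceiling[of q n z] unfolding rll_eps_def by simp

lemma rll_exponent_le:
  fixes q n :: nat and z :: int
  assumes "2 \<le> q" "1 \<le> n" "1 \<le> \<lceil>log q n\<rceil> + z"
  shows "real n * rll_eps q (nat (\<lceil>log q n\<rceil> + z)) \<le> (real q - 1) * real q powr (- z - 1)"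
  unfolding rll_exponent_eq[OF assms, symmetric] using assms(1)
  by (intro mult_left_mono powr_mono) (auto simp: ceiling_correct)

theorem theorem1:
  fixes q :: nat and z :: int
  assumes "q \<ge> 2"
  shows "(\<lambda>n. real (a_q q n (\<lceil>log (real q) (real n)\<rceil> + z)) /
           (real q ^ n * exp (- (real q - 1) *
              real q powr ((log (real q) (real n) - real_of_int \<lceil>log (real q) (real n)\<rceil>)
                           - real_of_int z - 1))))
         \<longlonglongrightarrow> 1"
proof -
  define k where "k n = nat (\<lceil>log (real q) (real n)\<rceil> + z)" for n
  have k_lim: "filterlim k at_top sequentially"
    unfolding k_def by (rule filterlim_nat_ceiling_log) (use assms in simp)
  then have "eventually (\<lambda>n. 1 \<le> k n) sequentially"
    unfolding filterlim_at_top by blast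
  with eventually_ge_at_top[of 1]
  have large: "eventually (\<lambda>n. 1 \<le> n \<and> 1 \<le> \<lceil>log (real q) (real n)\<rceil> + z) sequentially"
    unfolding k_def by eventually_elim auto
  then have "eventually (\<lambda>n. real n * rll_eps q (k n) \<le> (real q - 1) * real q powr (- z - 1))
      sequentially"
    unfolding k_def by eventually_elim (use rll_exponent_le assms in auto)
  then have "(\<lambda>n. real (card (RLL q (k n) n)) / (real q ^ n * exp (- (real n * rll_eps q (k n)))))
      \<longlonglongrightarrow> 1"
    by (rule tendsto_card_RLL_ratio[OF assms k_lim])
  then show ?thesis
    by (rule Lim_transform_eventually) (use large in \<open>eventually_elim, simp only: k_def
        a_q_eq_card_RLL rll_exponent_eq[OF assms] mult_minus_left\<close>)
qed

end
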